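(* With the model and matrices $V(z),U(z)$ as in the context, let $\hat V(z),\hat U(z)$ be the $(s+1)\times(s+1)$ matrices that coincide with $V(z),U(z)$ in columns $0,\dots,s-1$, and whose last column (column $s$) is \[ \hat V_{i,s}=1\ (0\le i<s),\quad \hat V_{s,s}=\bar\alpha;\qquad \hat U_{i,s}=\tilde\lambda\tilde p_a+i\tilde\theta\tilde\mu\ (0\le i<s),\quad \hat U_{s,s}=\tilde\lambda_{ob}+s\tilde\theta\tilde\mu . \] Then for any open set $\Omega\subseteq\mathbb{C}\setminus\{1\}$ and any differentiable row-vector function $\mathbf p:\Omega\to\mathbb{C}^{s+1}$, $\mathbf p'V=\mathbf pU$ on $\Omega$ if and only if $\mathbf p'\hat V=\mathbf p\hat U$ on $\Omega$. In particular the stationary generating function $\mathbf p(z)$ satisfies $\mathbf p'(z)\hat V(z)=\mathbf p(z)\hat U(z)$ for $|z|<1$; equivalently, \[ \sum_{i=0}^{s-1}p_i'(z)+\bar\alpha p_s'(z)=\sum_{i=0}^{s-1}(\tilde\lambda\tilde p_a+i\tilde\theta\tilde\mu)p_i(z)+(\tilde\lambda_{ob}+s\tilde\theta\tilde\mu)p_s(z) \] together with the first $s$ scalar equations of $\mathbf p'V=\mathbf pU$.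
   Context: Parameters: integer $s\ge1$, $\lambda,\mu,\nu>0$, $p_a,\tilde p_a\ge0$ with $p_a+\tilde p_a=1$, $\tilde\alpha_0\in[0,1]$, $p\in[0,1]$, $\bar p=1-p$, $\bar\alpha\in[0,1]$, $\bar\theta,\tilde\theta\ge0$; $\lambda_{ob}=\lambda\tilde\alpha_0$, $\tilde\lambda=\lambda/\nu$, $\tilde\mu=\mu/\nu$, $\tilde\lambda_{ob}=\lambda_{ob}/\nu$. $V(z),U(z)$ are the $(s+1)\times(s+1)$ matrices (indices $0..s$, other entries zero): $V_{i,i}=z-\bar p$, $V_{i,i+1}=-p$ for $i<s$, $V_{s,s}=\bar\alpha(z-1)$; $U_{i,i+1}=\tilde\lambda p_a$ for $i<s$, $U_{i,i-1}=i\tilde\mu(\bar\theta+\tilde\theta z)$ for $1\le i\le s$, $U_{i,i}=\tilde\lambda(z\tilde p_a-1)-i\tilde\mu(\bar\theta+\tilde\theta)$ for $i<s$, $U_{s,s}=\tilde\lambda_{ob}(z-1)-s\tilde\mu(\bar\theta+\tilde\theta)$. The "stationary generating function" is $\mathbf p(z)=(p_0,\dots,p_s)$, $p_i(z)=\sum_j\pi_{i,j}z^j$, of the stationary distribution (assumed to exist) of the Markovian multiserver retrial QBD whose level-up block is $A$ ($A_{i,i}=\lambda\tilde p_a$ for $i<s$, $A_{s,s}=\lambda\tilde\alpha_0$, $A_{i,i-1}=i\mu\tilde\theta$), level-$j$ down block $jC$ ($C_{i,i}=\nu\bar p$, $C_{i,i+1}=\nu p$ for $i<s$, $C_{s,s}=\nu\bar\alpha$),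 and diagonal block $B-\tilde A-j\tilde C$ ($B_{i,i+1}=\lambda p_a$, $B_{i,i-1}=i\mu\bar\theta$, rows of $B$ sum to 0; $\tilde A,\tilde C$ diagonal row-sum matrices); it satisfies $\mathbf p'V=\mathbf pU$ on $|z|<1$. *)

theory Defs
  imports "HOL-Analysis.Analysis"
begin

text \<open>Matrices are represented as functions nat => nat => complex, only the entries
with row and column indices in 0..s are relevant (all others are 0).
Parameters: lam = lambda, mu, nu, pa = p_a, pta = tilde p_a, a0 = tilde alpha_0,
p, abar = bar alpha, thb = bar theta, tht = tilde theta; bar p = 1 - p,
tilde lambda = lam/nu, tilde mu = mu/nu, tilde lambda_ob = lam*a0/nu.\<close>

definition Vmat :: "nat \<Rightarrow> real \<Rightarrow> real \<Rightarrow> complex \<Rightarrow> nat \<Rightarrow> nat \<Rightarrow> complex" where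
  "Vmat s p abar z i j =
     (if i < s \<and> j = i then z - of_real (1 - p)
      else if i < s \<and> j = i + 1 then - of_real p
      else if i = s \<and> j = s then of_real abar * (z - 1)
      else 0)"

definition Umat :: "nat \<Rightarrow> real \<Rightarrow> real \<Rightarrow> real \<Rightarrow> real \<Rightarrow> real \<Rightarrow> real \<Rightarrow> real \<Rightarrow> real
                    \<Rightarrow> complex \<Rightarrow> nat \<Rightarrow> nat \<Rightarrow> complex" where
  "Umat s lam mu nu pa pta a0 thb tht z i j =
     (let lt = of_real (lam / nu); mt = of_real (mu / nu); lob = of_real (lam * a0 / nu)
      in if i < s \<and> j = i + 1 then lt * of_real pa
      else if 1 \<le> i \<and> i \<le> s \<and> j = i - 1 then of_nat i * mt * (of_real thb + of_real tht * z)
      else if i < s \<and> j = i then lt * (z * of_real pta - 1) - of_nat i * mt * of_real (thb + tht)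
      else if i = s \<and> j = s then lob * (z - 1) - of_nat s * mt * of_real (thb + tht)
      else 0)"

definition Vhat :: "nat \<Rightarrow> real \<Rightarrow> real \<Rightarrow> complex \<Rightarrow> nat \<Rightarrow> nat \<Rightarrow> complex" where
  "Vhat s p abar z i j =
     (if j < s then Vmat s p abar z i j
      else if j = s then (if i < s then 1 else if i = s then of_real abar else 0)
      else 0)"

definition Uhat :: "nat \<Rightarrow> real \<Rightarrow> real \<Rightarrow> real \<Rightarrow> real \<Rightarrow> real \<Rightarrow> real \<Rightarrow> real \<Rightarrow> real
                    \<Rightarrow> complex \<Rightarrow> nat \<Rightarrow> nat \<Rightarrow> complex" where
  "Uhat s lam mu nu pa pta a0 thb tht z i j =
     (if j < s then Umat s lam mu nu pa pta a0 thb tht z i j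
      else if j = s then
        (if i < s then of_real (lam / nu * pta + real i * tht * (mu / nu))
         else if i = s then of_real (lam * a0 / nu + real s * tht * (mu / nu))
         else 0)
      else 0)"

definition row_ode :: "nat \<Rightarrow> (complex \<Rightarrow> nat \<Rightarrow> nat \<Rightarrow> complex) \<Rightarrow> (complex \<Rightarrow> nat \<Rightarrow> nat \<Rightarrow> complex)
                       \<Rightarrow> (nat \<Rightarrow> complex \<Rightarrow> complex) \<Rightarrow> complex set \<Rightarrow> bool" where
  "row_ode s M N P \<Omega> \<longleftrightarrow>
     (\<forall>z\<in>\<Omega>. \<forall>j\<le>s. (\<Sum>i\<le>s. deriv (P i) z * M z i j) = (\<Sum>i\<le>s. P i z * N z i j))"

end

theory Submission
  imports Defs
begin

text \<open>Every row of \<open>V(z)\<close> and of \<open>U(z)\<close> sums to \<open>(z - 1)\<close> times the corresponding entry of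
the new last column (for \<open>U\<close> this uses \<open>p\<^sub>a + p\<^sub>a~ = 1\<close>). Summing the \<open>s + 1\<close> scalar equations
of \<open>p' V = p U\<close> therefore gives \<open>(z - 1)\<close> times the last scalar equation of the hatted system,
so for \<open>z \<noteq> 1\<close> either last equation may be traded for that sum while the first \<open>s\<close> equations
are shared.\<close>

lemma sum_vec_mat_columns:
  fixes x :: "nat \<Rightarrow> 'a::comm_ring" and M :: "nat \<Rightarrow> nat \<Rightarrow> 'a"
  shows "(\<Sum>j\<le>s. \<Sum>i\<le>s. x i * M i j) = (\<Sum>i\<le>s. x i * (\<Sum>j\<le>s. M i j))"
  by (subst sum.swap) (simp add: sum_distrib_left)

lemma vec_mat_eq_iff_replace_last_column:
  fixes x y :: "nat \<Rightarrow> 'a::field" and M N M' N' :: "nat \<Rightarrow> nat \<Rightarrow> 'a"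
  assumes "c \<noteq> 0"
    and same_columns: "\<And>i j. i \<le> s \<Longrightarrow> j < s \<Longrightarrow> M' i j = M i j \<and> N' i j = N i j"
    and M_row_sum: "\<And>i. i \<le> s \<Longrightarrow> (\<Sum>j\<le>s. M i j) = c * M' i s"
    and N_row_sum: "\<And>i. i \<le> s \<Longrightarrow> (\<Sum>j\<le>s. N i j) = c * N' i s"
  shows "(\<forall>j\<le>s. (\<Sum>i\<le>s. x i * M i j) = (\<Sum>i\<le>s. y i * N i j))
     \<longleftrightarrow> (\<forall>j\<le>s. (\<Sum>i\<le>s. x i * M' i j) = (\<Sum>i\<le>s. y i * N' i j))"
proof -
  define d where "d j = (\<Sum>i\<le>s. x i * M i j) - (\<Sum>i\<le>s. y i * N i j)" for j
  define d' where "d' j = (\<Sum>i\<le>s. x i * M' i j) - (\<Sum>i\<le>s. y i * N' i j)" for j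
  have shared: "d' j = d j" if "j < s" for j
    using same_columns that by (simp add: d_def d'_def)
  have "(\<Sum>j\<le>s. d j) = (\<Sum>i\<le>s. x i * (c * M' i s)) - (\<Sum>i\<le>s. y i * (c * N' i s))"
    by (simp add: d_def sum_subtractf sum_vec_mat_columns M_row_sum N_row_sum)
  also have "\<dots> = c * d' s"
    by (simp add: d'_def sum_distrib_left right_diff_distrib algebra_simps)
  finally have total: "(\<Sum>j\<le>s. d j) = c * d' s" .
  have split: "(\<Sum>j\<le>s. d j) = (\<Sum>j<s. d j) + d s"
    by (simp add: lessThan_Suc_atMost[symmetric])
  have "(\<forall>j\<le>s. d j = 0) \<longleftrightarrow> (\<forall>j\<le>s. d' j = 0)"
  proof
    assume "\<forall>j\<le>s. d j = 0"
    then show "\<forall>j\<le>s. d' j = 0"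
      using total shared \<open>c \<noteq> 0\<close> by (metis le_neq_implies_less mult_eq_0_iff order_refl sum.neutral atMost_iff)
  next
    assume zero': "\<forall>j\<le>s. d' j = 0"
    then have "\<forall>j<s. d j = 0" using shared by simp
    then have "d s = 0" using split total zero' by simp
    with \<open>\<forall>j<s. d j = 0\<close> show "\<forall>j\<le>s. d j = 0" by (metis le_neq_implies_less)
  qed
  then show ?thesis by (simp add: d_def d'_def)
qed

lemma Vmat_row_sum:
  assumes "i \<le> s"
  shows "(\<Sum>j\<le>s. Vmat s p abar z i j) = (z - 1) * Vhat s p abar z i s"
proof (cases "i < s")
  case True
  have "Vmat s p abar z i = (\<lambda>j. (if j = i then z - of_real (1 - p) else 0) + (if j = i + 1 then - of_real p else 0))"
    using True by (auto simp: Vmat_def fun_eq_iff)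
  then show ?thesis using True by (simp add: sum.distrib Vhat_def)
next
  case False
  with assms have "i = s" by simp
  then have "Vmat s p abar z i = (\<lambda>j. if j = s then of_real abar * (z - 1) else 0)"
    by (auto simp: Vmat_def fun_eq_iff)
  then show ?thesis using \<open>i = s\<close> by (simp add: Vhat_def mult.commute)
qed

lemma Umat_row_sum:
  assumes "i \<le> s" and "pa + pta = 1"
  shows "(\<Sum>j\<le>s. Umat s lam mu nu pa pta a0 thb tht z i j) = (z - 1) * Uhat s lam mu nu pa pta a0 thb tht z i s"
proof -
  define lt where "lt = (of_real (lam / nu) :: complex)"
  define mt where "mt = (of_real (mu / nu) :: complex)"
  define lob where "lob = (of_real (lam * a0 / nu) :: complex)"
  show ?thesis
  proof (cases "i < s")
    case True
    have "Umat s lam mu nu pa pta a0 thb tht z i = (\<lambda>j. (if j = i + 1 then lt * of_real pa else 0)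
        + (if j = i - 1 \<and> 1 \<le> i then of_nat i * mt * (of_real thb + of_real tht * z) else 0)
        + (if j = i then lt * (z * of_real pta - 1) - of_nat i * mt * of_real (thb + tht) else 0))"
      using True by (auto simp: Umat_def fun_eq_iff lt_def mt_def Let_def)
    then have "(\<Sum>j\<le>s. Umat s lam mu nu pa pta a0 thb tht z i j) = lt * of_real pa
        + (if 1 \<le> i then of_nat i * mt * (of_real thb + of_real tht * z) else 0)
        + (lt * (z * of_real pta - 1) - of_nat i * mt * of_real (thb + tht))"
      using True by (simp add: sum.distrib, linarith)
    also have "\<dots> = (z - 1) * (lt * of_real pta + of_nat i * of_real tht * mt)"
    proof -
      have "lt * of_real pa + lt * of_real pta = lt"
        by (metis assms(2) distrib_left mult.right_neutral of_real_1 of_real_add)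
      then show ?thesis by (cases "i = 0") (simp_all add: algebra_simps)
    qed
    finally show ?thesis using True by (simp add: Uhat_def lt_def mt_def)
  next
    case False
    with assms(1) have "i = s" by simp
    then have "Umat s lam mu nu pa pta a0 thb tht z i = (\<lambda>j. (if j = s - 1 then of_nat s * mt * (of_real thb + of_real tht * z) else 0)
        + (if j = s then lob * (z - 1) - of_nat s * mt * of_real (thb + tht) else 0))"
      using False by (auto simp: Umat_def fun_eq_iff lob_def mt_def Let_def)
    then have "(\<Sum>j\<le>s. Umat s lam mu nu pa pta a0 thb tht z i j)
        = of_nat s * mt * (of_real thb + of_real tht * z) + (lob * (z - 1) - of_nat s * mt * of_real (thb + tht))"
      by (simp add: sum.distrib)
    also have "\<dots> = (z - 1) * (lob + of_nat s * of_real tht * mt)"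
      by (simp add: algebra_simps)
    finally show ?thesis using \<open>i = s\<close> by (simp add: Uhat_def lob_def mt_def)
  qed
qed

theorem lemma5p2:
  fixes s :: nat and lam mu nu pa pta a0 p abar thb tht :: real
    and \<Omega> :: "complex set" and P :: "nat \<Rightarrow> complex \<Rightarrow> complex"
  assumes "s \<ge> 1" and "lam > 0" and "mu > 0" and "nu > 0"
    and "pa \<ge> 0" and "pta \<ge> 0" and "pa + pta = 1"
    and "0 \<le> a0" and "a0 \<le> 1" and "0 \<le> p" and "p \<le> 1"
    and "0 \<le> abar" and "abar \<le> 1" and "thb \<ge> 0" and "tht \<ge> 0"
    and "open \<Omega>" and "\<Omega> \<subseteq> - {1}"
    and "\<forall>i\<le>s. \<forall>z\<in>\<Omega>. P i field_differentiable (at z)"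
  shows "row_ode s (Vmat s p abar) (Umat s lam mu nu pa pta a0 thb tht) P \<Omega>
     \<longleftrightarrow> row_ode s (Vhat s p abar) (Uhat s lam mu nu pa pta a0 thb tht) P \<Omega>"
proof -
  have "(\<forall>j\<le>s. (\<Sum>i\<le>s. deriv (P i) z * Vmat s p abar z i j) = (\<Sum>i\<le>s. P i z * Umat s lam mu nu pa pta a0 thb tht z i j))
    \<longleftrightarrow> (\<forall>j\<le>s. (\<Sum>i\<le>s. deriv (P i) z * Vhat s p abar z i j) = (\<Sum>i\<le>s. P i z * Uhat s lam mu nu pa pta a0 thb tht z i j))"
    if "z \<in> \<Omega>" for z
  proof (rule vec_mat_eq_iff_replace_last_column)
    show "z - 1 \<noteq> 0" using that \<open>\<Omega> \<subseteq> - {1}\<close> by auto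
  qed (simp_all add: Vhat_def Uhat_def Vmat_row_sum Umat_row_sum \<open>pa + pta = 1\<close>)
  then show ?thesis unfolding row_ode_def by blast
qed

end
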